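(* Let $P,Q$ be standard CCSK$^{\mathrm P}$ processes. If $P\approx_{\mathrm{FR}}Q$ then $P\approx_{\mathrm{KP}}Q$.
   Context: Names $\mathsf N$ with bijection $\overline\cdot$ onto disjoint co-names; $\mathsf L=\mathsf N\cup\overline{\mathsf N}\cup\{\tau\}$ ($\alpha$ over $\mathsf L$, $\lambda$ over $\mathsf L\setminus\{\tau\}$); keys $\mathsf K$ denumerable. CCSK processes $X::=\mathbf 0\mid\alpha.X\mid X\backslash\lambda\mid X+Y\mid X|Y\mid\alpha[k].X$; $\mathrm{keys}(X)$ keys in $X$; standard means no keys. Directions $D\in\{\mathrm L,\mathrm R\}$, $\bar{\mathrm L}=\mathrm R$, $\bar{\mathrm R}=\mathrm L$. Proof keyed labels $\theta::=\upsilon\alpha[k]\mid\upsilon\langle\upsilon_1\lambda[k],\upsilon_2\overline\lambda[k]\rangle$ ($\upsilon,\upsilon_i\in\{|_{\mathrm L},|_{\mathrm R},+_{\mathrm L},+_{\mathrm R}\}^*$), $\ell(\upsilon\alpha[k])=\alpha$, $\ell(\upsilon\langle\cdots\rangle)=\tau$, $\mathrm{key}(\theta)=k$. Forward CCSK$^{\mathrm P}$ transitions: least relation closed under (act) $\alpha.X\xrightarrow{\alpha[k]}\alpha[k].X$ if $\mathrm{keys}(X)=\emptyset$; (pre) $X\xrightarrow\theta X',\mathrm{key}(\theta)\ne k\Rightarrow\alpha[k].X\xrightarrow\theta\alpha[k].X'$; (res) $X\xrightarrow\theta X',\ell(\theta)\notin\{\lambda,\overline\lambda\}\Rightarrow X\backslash\lambda\xrightarrow\theta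 X'\backslash\lambda$; (par) $X\xrightarrow\theta X',\mathrm{key}(\theta)\notin\mathrm{keys}(Y)\Rightarrow X|Y\xrightarrow{|_{\mathrm L}\theta}X'|Y$, $Y|X\xrightarrow{|_{\mathrm R}\theta}Y|X'$; (syn) $X\xrightarrow{\upsilon_1\lambda[k]}X',Y\xrightarrow{\upsilon_2\overline\lambda[k]}Y'\Rightarrow X|Y\xrightarrow{\langle\upsilon_1\lambda[k],\upsilon_2\overline\lambda[k]\rangle}X'|Y'$; (sum) $X\xrightarrow\theta X',\mathrm{keys}(Y)=\emptyset\Rightarrow X+Y\xrightarrow{+_{\mathrm L}\theta}X'+Y$, $Y+X\xrightarrow{+_{\mathrm R}\theta}Y+X'$. Backward transitions: $Y\rightsquigarrow^\theta X$ iff $X\xrightarrow\theta Y$; $\bar t$ the inverse. Paths: sequences of composable transitions; rooted if source cannot do a backward transition; $\mathrm{orig}(X)$ is obtained by erasing all keys. Connected transitions: a path from the source of one to the target of the other. Independence $\iota$ on proof labels: least relation closed under (C1) $+_D\theta\mathrel\iota+_D\theta'$ if $\theta\mathrel\iota\theta'$; (P1) $|_D\theta\mathrel\iota|_D\theta'$ if $\theta\mathrel\iota\theta'$; (P2$_k$) $|_D\theta\mathrel\iota|_{\bar D}\theta'$ if keys differ; (S1) $|_D\theta\mathrel\iota\langle\theta_{\mathrm L},\theta_{\mathrm R}\rangle$ if $\theta\mathrel\iota\theta_D$; (S2) $\langle\theta_{\mathrm L},\theta_{\mathrm R}\rangle\mathrel\iota|_D\theta$ if $\theta_D\mathrel\iota\theta$;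 (S3) $\langle\theta_1,\theta_2\rangle\mathrel\iota\langle\theta_1',\theta_2'\rangle$ if $\theta_1\mathrel\iota\theta_1'$, $\theta_2\mathrel\iota\theta_2'$. On transitions $t\mathrel\iota u$ iff connected and labels $\iota$. Events: $\sim$ is the smallest equivalence with $t\sim t'$ whenever $t:P\to Q$, $u:P\to R$, $u':Q\to S$, $t':R\to S$ ($u'$ with label/direction of $u$, $t'$ of $t$) and $t\mathrel\iota u$; events $[t]$; forward events are classes of forward transitions; $\bar e=[\bar t]$; $\ell(e)$, $\mathrm{key}(e)$ are $\ell$ and key of the label of any $t\in e$. $\sharp(\varepsilon,e)=0$, $\sharp(tr,e)=\sharp(r,e)+1$ if $t\in e$, $-1$ if $t\in\bar e$, unchanged otherwise. $\mathrm{ev}(X)$: forward events $e$ with $\sharp(r,e)>0$ for some rooted path $r$ with target $X$. $\le_X$ on $\mathrm{keys}(X)$ is the reflexive transitive closure of $\mathrm{ord}(X)$: $\mathrm{ord}(\mathbf 0)=\emptyset$, $\mathrm{ord}(\alpha.X)=\mathrm{ord}(X\backslash\lambda)=\mathrm{ord}(X)$, $\mathrm{ord}(X+Y)=\mathrm{ord}(X|Y)=\mathrm{ord}(X)\cup\mathrm{ord}(Y)$, $\mathrm{ord}(\alpha[n].X)=\mathrm{ord}(X)\cup\{n<k\mid k\in\mathrm{keys}(X)\}$. A bijection $f:\mathrm{ev}(X)\to\mathrm{ev}(Y)$ is label preserving if $\ell(e)=\ell(f(e))$, order preserving if $\mathrm{key}(e)\le_X\mathrm{key}(e')\iff\mathrm{key}(f(e))\le_Y\mathrm{key}(f(e'))$.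 KP bisimulation between standard $X,Y$: a set $R$ of triples $(X',Y',f')$ with $(X,Y,\emptyset)\in R$ such that whenever $(X',Y',f')\in R$: $f'$ is a label- and order-preserving bijection $\mathrm{ev}(X')\to\mathrm{ev}(Y')$; every forward $t:X'\to X''$ is matched by a forward $t':Y'\to Y''$ with $(X'',Y'',f'\cup\{[t]\mapsto[t']\})\in R$, and every forward $t':Y'\to Y''$ by a forward $t:X'\to X''$ with $(X'',Y'',f'\cup\{[t]\mapsto[t']\})\in R$. $X\approx_{\mathrm{KP}}Y$ iff there is a KP bisimulation between $\mathrm{orig}(X)$ and $\mathrm{orig}(Y)$ containing $(X,Y,f)$ for some $f$. FR bisimulation between $X$ and $Y$: a relation $R$ on processes with $X\mathrel RY$ such that whenever $X'\mathrel RY'$: each forward $X'\xrightarrow\theta X''$ is matched by a forward $Y'\xrightarrow{\theta'}Y''$ with $\ell(\theta)=\ell(\theta')$, $\mathrm{key}(\theta)=\mathrm{key}(\theta')$ and $X''\mathrel RY''$; symmetrically for forward transitions of $Y'$; and the same two conditions for backward transitions. $X\approx_{\mathrm{FR}}Y$ iff there is an FR bisimulation between $X$ and $Y$. *)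

theory Defs
  imports Main
begin

datatype 'n vis = Nm 'n | CoNm 'n

datatype 'n act = Vis "'n vis" | Tau

fun coname :: "'n vis \<Rightarrow> 'n vis" where
  "coname (Nm a) = CoNm a"
| "coname (CoNm a) = Nm a"

datatype 'n proc =
    Nil
  | Pre "'n act" "'n proc"
  | Res "'n proc" "'n vis"
  | Sum "'n proc" "'n proc"
  | Par "'n proc" "'n proc"
  | KPre "'n act" nat "'n proc"

fun keys :: "'n proc \<Rightarrow> nat set" where
  "keys Nil = {}"
| "keys (Pre a X) = keys X"
| "keys (Res X l) = keys X"
| "keys (Sum X Y) = keys X \<union> keys Y"
| "keys (Par X Y) = keys X \<union> keys Y"
| "keys (KPre a k X) = insert k (keys X)"

definition standard :: "'n proc \<Rightarrow> bool" where
  "standard X \<longleftrightarrow> keys X = {}"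

fun orig :: "'n proc \<Rightarrow> 'n proc" where
  "orig Nil = Nil"
| "orig (Pre a X) = Pre a (orig X)"
| "orig (Res X l) = Res (orig X) l"
| "orig (Sum X Y) = Sum (orig X) (orig Y)"
| "orig (Par X Y) = Par (orig X) (orig Y)"
| "orig (KPre a k X) = Pre a (orig X)"

datatype dir = DL | DR

fun flip :: "dir \<Rightarrow> dir" where
  "flip DL = DR" | "flip DR = DL"

text \<open>Proof keyed labels: the prefix upsilon is represented by nested PPar / PSum.\<close>
datatype 'n plab =
    PAct "'n act" nat
  | PPar dir "'n plab"
  | PSum dir "'n plab"
  | PSyn "'n plab" "'n plab"

fun plab_act :: "'n plab \<Rightarrow> 'n act" where
  "plab_act (PAct a k) = a"
| "plab_act (PPar D th) = plab_act th"
| "plab_act (PSum D th) = plab_act th"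
| "plab_act (PSyn th1 th2) = Tau"

fun pkey :: "'n plab \<Rightarrow> nat" where
  "pkey (PAct a k) = k"
| "pkey (PPar D th) = pkey th"
| "pkey (PSum D th) = pkey th"
| "pkey (PSyn th1 th2) = pkey th1"

text \<open>base_act th = Some (alpha,k) iff th has the form upsilon alpha[k].\<close>
fun base_act :: "'n plab \<Rightarrow> ('n act \<times> nat) option" where
  "base_act (PAct a k) = Some (a, k)"
| "base_act (PPar D th) = base_act th"
| "base_act (PSum D th) = base_act th"
| "base_act (PSyn th1 th2) = None"

fun sel :: "dir \<Rightarrow> 'a \<Rightarrow> 'a \<Rightarrow> 'a" where
  "sel DL x y = x" | "sel DR x y = y"

inductive fwd :: "'n proc \<Rightarrow> 'n plab \<Rightarrow> 'n proc \<Rightarrow> bool" where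
  act: "keys X = {} \<Longrightarrow> fwd (Pre a X) (PAct a k) (KPre a k X)"
| pre: "fwd X th X' \<Longrightarrow> pkey th \<noteq> k \<Longrightarrow> fwd (KPre a k X) th (KPre a k X')"
| res: "fwd X th X' \<Longrightarrow> plab_act th \<noteq> Vis l \<Longrightarrow> plab_act th \<noteq> Vis (coname l)
        \<Longrightarrow> fwd (Res X l) th (Res X' l)"
| parL: "fwd X th X' \<Longrightarrow> pkey th \<notin> keys Y \<Longrightarrow> fwd (Par X Y) (PPar DL th) (Par X' Y)"
| parR: "fwd X th X' \<Longrightarrow> pkey th \<notin> keys Y \<Longrightarrow> fwd (Par Y X) (PPar DR th) (Par Y X')"
| syn: "fwd X th1 X' \<Longrightarrow> fwd Y th2 Y' \<Longrightarrow> base_act th1 = Some (Vis l, k)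
        \<Longrightarrow> base_act th2 = Some (Vis (coname l), k)
        \<Longrightarrow> fwd (Par X Y) (PSyn th1 th2) (Par X' Y')"
| sumL: "fwd X th X' \<Longrightarrow> keys Y = {} \<Longrightarrow> fwd (Sum X Y) (PSum DL th) (Sum X' Y)"
| sumR: "fwd X th X' \<Longrightarrow> keys Y = {} \<Longrightarrow> fwd (Sum Y X) (PSum DR th) (Sum Y X')"

definition bwd :: "'n proc \<Rightarrow> 'n plab \<Rightarrow> 'n proc \<Rightarrow> bool" where
  "bwd Y th X \<longleftrightarrow> fwd X th Y"

type_synonym 'n trans = "'n proc \<times> 'n plab \<times> bool \<times> 'n proc"

definition src :: "'n trans \<Rightarrow> 'n proc" where "src t = fst t"
definition lbl :: "'n trans \<Rightarrow> 'n plab" where "lbl t = fst (snd t)"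
definition isfwd :: "'n trans \<Rightarrow> bool" where "isfwd t = fst (snd (snd t))"
definition tgt :: "'n trans \<Rightarrow> 'n proc" where "tgt t = snd (snd (snd t))"

definition valid :: "'n trans \<Rightarrow> bool" where
  "valid t \<longleftrightarrow> (if isfwd t then fwd (src t) (lbl t) (tgt t) else bwd (src t) (lbl t) (tgt t))"

definition tinv :: "'n trans \<Rightarrow> 'n trans" where
  "tinv t = (tgt t, lbl t, \<not> isfwd t, src t)"

fun chain :: "'n proc \<Rightarrow> 'n trans list \<Rightarrow> 'n proc \<Rightarrow> bool" where
  "chain P [] Q \<longleftrightarrow> P = Q"
| "chain P (t # ts) Q \<longleftrightarrow> valid t \<and> src t = P \<and> chain (tgt t) ts Q"

definition rooted :: "'n proc \<Rightarrow> bool" where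
  "rooted P \<longleftrightarrow> \<not> (\<exists>th X. bwd P th X)"

definition connected :: "'n trans \<Rightarrow> 'n trans \<Rightarrow> bool" where
  "connected t u \<longleftrightarrow> (\<exists>ts. chain (src t) ts (tgt u)) \<or> (\<exists>ts. chain (src u) ts (tgt t))"

inductive indep :: "'n plab \<Rightarrow> 'n plab \<Rightarrow> bool" where
  C1: "indep th th' \<Longrightarrow> indep (PSum D th) (PSum D th')"
| P1: "indep th th' \<Longrightarrow> indep (PPar D th) (PPar D th')"
| P2: "pkey th \<noteq> pkey th' \<Longrightarrow> indep (PPar D th) (PPar (flip D) th')"
| S1: "indep th (sel D thL thR) \<Longrightarrow> indep (PPar D th) (PSyn thL thR)"
| S2: "indep (sel D thL thR) th \<Longrightarrow> indep (PSyn thL thR) (PPar D th)"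
| S3: "indep th1 th1' \<Longrightarrow> indep th2 th2' \<Longrightarrow> indep (PSyn th1 th2) (PSyn th1' th2')"

definition indep_trans :: "'n trans \<Rightarrow> 'n trans \<Rightarrow> bool" where
  "indep_trans t u \<longleftrightarrow> connected t u \<and> indep (lbl t) (lbl u)"

inductive diamond :: "'n trans \<Rightarrow> 'n trans \<Rightarrow> bool" where
  "valid (P, tht, dt, Q) \<Longrightarrow> valid (P, thu, du, R) \<Longrightarrow> valid (Q, thu, du, S)
   \<Longrightarrow> valid (R, tht, dt, S) \<Longrightarrow> indep_trans (P, tht, dt, Q) (P, thu, du, R)
   \<Longrightarrow> diamond (P, tht, dt, Q) (R, tht, dt, S)"

definition tsim :: "'n trans \<Rightarrow> 'n trans \<Rightarrow> bool" where
  "tsim t t' \<longleftrightarrow> valid t \<and> valid t' \<and> equivclp diamond t t'"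

definition eclass :: "'n trans \<Rightarrow> 'n trans set" where
  "eclass t = {t'. tsim t t'}"

definition fwd_event :: "'n trans set \<Rightarrow> bool" where
  "fwd_event e \<longleftrightarrow> (\<exists>t. valid t \<and> isfwd t \<and> e = eclass t)"

definition ev_bar :: "'n trans set \<Rightarrow> 'n trans set" where
  "ev_bar e = eclass (tinv (SOME t. t \<in> e))"

definition ev_lab :: "'n trans set \<Rightarrow> 'n act" where
  "ev_lab e = plab_act (lbl (SOME t. t \<in> e))"

definition ev_key :: "'n trans set \<Rightarrow> nat" where
  "ev_key e = pkey (lbl (SOME t. t \<in> e))"

definition sharp :: "'n trans list \<Rightarrow> 'n trans set \<Rightarrow> int" where
  "sharp ts e = sum_list (map (\<lambda>t. if t \<in> e then 1 else if t \<in> ev_bar e then -1 else 0) ts)"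

definition ev :: "'n proc \<Rightarrow> 'n trans set set" where
  "ev X = {e. fwd_event e \<and> (\<exists>P ts. rooted P \<and> chain P ts X \<and> sharp ts e > 0)}"

fun ord :: "'n proc \<Rightarrow> (nat \<times> nat) set" where
  "ord Nil = {}"
| "ord (Pre a X) = ord X"
| "ord (Res X l) = ord X"
| "ord (Sum X Y) = ord X \<union> ord Y"
| "ord (Par X Y) = ord X \<union> ord Y"
| "ord (KPre a n X) = ord X \<union> {(n, k) | k. k \<in> keys X}"

definition key_le :: "'n proc \<Rightarrow> nat \<Rightarrow> nat \<Rightarrow> bool" where
  "key_le X a b \<longleftrightarrow> a \<in> keys X \<and> b \<in> keys X \<and> (a, b) \<in> (ord X)\<^sup>*"

type_synonym 'n evmap = "('n trans set \<times> 'n trans set) set"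

definition bij_rel :: "('a \<times> 'b) set \<Rightarrow> 'a set \<Rightarrow> 'b set \<Rightarrow> bool" where
  "bij_rel f A B \<longleftrightarrow> f \<subseteq> A \<times> B \<and> (\<forall>a\<in>A. \<exists>!b. (a, b) \<in> f) \<and> (\<forall>b\<in>B. \<exists>!a. (a, b) \<in> f)"

definition label_pres :: "'n evmap \<Rightarrow> bool" where
  "label_pres f \<longleftrightarrow> (\<forall>(e, d)\<in>f. ev_lab e = ev_lab d)"

definition order_pres :: "'n proc \<Rightarrow> 'n proc \<Rightarrow> 'n evmap \<Rightarrow> bool" where
  "order_pres X Y f \<longleftrightarrow> (\<forall>(e1, d1)\<in>f. \<forall>(e2, d2)\<in>f.
      key_le X (ev_key e1) (ev_key e2) \<longleftrightarrow> key_le Y (ev_key d1) (ev_key d2))"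

definition KP_bisim :: "('n proc \<times> 'n proc \<times> 'n evmap) set \<Rightarrow> 'n proc \<Rightarrow> 'n proc \<Rightarrow> bool" where
  "KP_bisim R X Y \<longleftrightarrow> standard X \<and> standard Y \<and> (X, Y, {}) \<in> R \<and>
    (\<forall>(X', Y', f) \<in> R.
       bij_rel f (ev X') (ev Y') \<and> label_pres f \<and> order_pres X' Y' f \<and>
       (\<forall>th X''. fwd X' th X'' \<longrightarrow>
          (\<exists>th' Y''. fwd Y' th' Y'' \<and>
             (X'', Y'', f \<union> {(eclass (X', th, True, X''), eclass (Y', th', True, Y''))}) \<in> R)) \<and>
       (\<forall>th' Y''. fwd Y' th' Y'' \<longrightarrow>
          (\<exists>th X''. fwd X' th X'' \<and>
             (X'', Y'', f \<union> {(eclass (X', th, True, X''), eclass (Y', th', True, Y''))}) \<in> R)))"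

definition KP_equiv :: "'n proc \<Rightarrow> 'n proc \<Rightarrow> bool" where
  "KP_equiv X Y \<longleftrightarrow> (\<exists>R f. KP_bisim R (orig X) (orig Y) \<and> (X, Y, f) \<in> R)"

definition FR_bisim :: "('n proc \<Rightarrow> 'n proc \<Rightarrow> bool) \<Rightarrow> 'n proc \<Rightarrow> 'n proc \<Rightarrow> bool" where
  "FR_bisim R X Y \<longleftrightarrow> R X Y \<and>
    (\<forall>X' Y'. R X' Y' \<longrightarrow>
      (\<forall>th X''. fwd X' th X'' \<longrightarrow> (\<exists>th' Y''. fwd Y' th' Y'' \<and>
          plab_act th = plab_act th' \<and> pkey th = pkey th' \<and> R X'' Y'')) \<and>
      (\<forall>th' Y''. fwd Y' th' Y'' \<longrightarrow> (\<exists>th X''. fwd X' th X'' \<and>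
          plab_act th = plab_act th' \<and> pkey th = pkey th' \<and> R X'' Y'')) \<and>
      (\<forall>th X''. bwd X' th X'' \<longrightarrow> (\<exists>th' Y''. bwd Y' th' Y'' \<and>
          plab_act th = plab_act th' \<and> pkey th = pkey th' \<and> R X'' Y'')) \<and>
      (\<forall>th' Y''. bwd Y' th' Y'' \<longrightarrow> (\<exists>th X''. bwd X' th X'' \<and>
          plab_act th = plab_act th' \<and> pkey th = pkey th' \<and> R X'' Y'')))"

definition FR_equiv :: "'n proc \<Rightarrow> 'n proc \<Rightarrow> bool" where
  "FR_equiv X Y \<longleftrightarrow> (\<exists>R. FR_bisim R X Y)"

end

theory Submission
  imports Defs
begin

(* Let R be an FR bisimulation between standard P and Q. Restricting R to pairs reachable
  from P and Q, and extending the event bijection along every pair of matched forward steps,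
  gives a KP bisimulation. Two facts make this work.

  Events: by backward determinism, the source and label of a forward transition are
  determined by its target and key, and a transition commutes with undoing any key that it
  does not depend on. Undoing such keys one at a time (each step a diamond) turns every
  forward transition into an equivalent one whose target is the causal history of its key,
  so two forward transitions with the same key and the same history are equivalent. Hence
  the events of a reachable process X are those with a transition whose key is in X and
  whose history agrees with X, and a forward step adds exactly one new event, carrying the
  label and key of the step.

  Order: in a reachable process k1 is not below k2 exactly when k1 can be undone along a
  backward path that never undoes k2. This is transferred by the key-preserving backward
  clauses of R, so R-related processes with the same keys have the same key order. *)

lemma finite_keys: "finite (keys X)"
  by (induction X) auto

lemma ord_subset_keys: "ord X \<subseteq> keys X \<times> keys X"
  by (induction X) auto

lemma finite_ord: "finite (ord X)"
  using finite_subset[OF ord_subset_keys] finite_keys by blast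

lemma base_act_SomeD: "base_act th = Some (a, k) \<Longrightarrow> plab_act th = a \<and> pkey th = k"
  by (induction th) auto

lemma base_act_pkey: "base_act th = Some (a, k) \<Longrightarrow> pkey th = k"
  using base_act_SomeD by blast

lemma base_act_NoneD: "base_act th = None \<Longrightarrow> plab_act th = Tau"
  by (induction th) auto

lemma fwd_keys: "fwd X th Y \<Longrightarrow> pkey th \<notin> keys X \<and> keys Y = insert (pkey th) (keys X)"
proof (induction rule: fwd.induct)
  case (syn X th1 X' Y th2 Y' l k)
  then show ?case using base_act_SomeD[OF syn.hyps(3)] base_act_SomeD[OF syn.hyps(4)] by auto
qed auto

lemma fwd_ord: "fwd X th Y \<Longrightarrow> ord X \<subseteq> ord Y \<and> ord Y \<subseteq> ord X \<union> keys X \<times> {pkey th}"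
proof (induction rule: fwd.induct)
  case (act X a k)
  then show ?case using ord_subset_keys[of X] by auto
next
  case (pre X th X' k a)
  then show ?case using fwd_keys[OF pre.hyps(1)] by auto
next
  case (syn X th1 X' Y th2 Y' l k)
  then show ?case using base_act_SomeD[OF syn.hyps(3)] base_act_SomeD[OF syn.hyps(4)] by auto
qed auto

lemma fwd_key_maximal: "fwd X th Y \<Longrightarrow> (pkey th, x) \<notin> ord Y"
  using fwd_ord[of X th Y] fwd_keys[of X th Y] ord_subset_keys[of X] by blast

lemma fwd_rtrancl_from_key: "fwd X th Y \<Longrightarrow> (pkey th, x) \<in> (ord Y)\<^sup>* \<Longrightarrow> x = pkey th"
  by (metis converse_rtranclE fwd_key_maximal)

lemma fwd_rtrancl_ord_iff:
  assumes "fwd X th Y" and "k \<noteq> pkey th"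
  shows "(x, k) \<in> (ord Y)\<^sup>* \<longleftrightarrow> (x, k) \<in> (ord X)\<^sup>*"
proof
  show "(x, k) \<in> (ord Y)\<^sup>* \<Longrightarrow> (x, k) \<in> (ord X)\<^sup>*"
  proof (induction rule: converse_rtrancl_induct)
    case (step y z)
    then have "z \<noteq> pkey th" using fwd_rtrancl_from_key[OF assms(1)] assms(2) by blast
    then have "(y, z) \<in> ord X" using step.hyps(1) fwd_ord[OF assms(1)] by auto
    then show ?case using step.IH by auto
  qed simp
  show "(x, k) \<in> (ord X)\<^sup>* \<Longrightarrow> (x, k) \<in> (ord Y)\<^sup>*"
    using rtrancl_mono fwd_ord[OF assms(1)] by blast
qed

section \<open>Causal histories\<close>

fun restrict_keys :: "nat set \<Rightarrow> 'n proc \<Rightarrow> 'n proc" where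
  "restrict_keys D Nil = Nil"
| "restrict_keys D (Pre a X) = Pre a (restrict_keys D X)"
| "restrict_keys D (Res X l) = Res (restrict_keys D X) l"
| "restrict_keys D (Sum X Y) = Sum (restrict_keys D X) (restrict_keys D Y)"
| "restrict_keys D (Par X Y) = Par (restrict_keys D X) (restrict_keys D Y)"
| "restrict_keys D (KPre a n X) =
     (if n \<in> D then KPre a n (restrict_keys D X) else Pre a (restrict_keys D X))"

definition below :: "'n proc \<Rightarrow> nat \<Rightarrow> nat set" where
  "below X k = {x. (x, k) \<in> (ord X)\<^sup>*}"

definition history :: "'n proc \<Rightarrow> nat \<Rightarrow> 'n proc" where
  "history X k = restrict_keys (below X k) X"

lemma restrict_keys_id: "keys X \<subseteq> D \<Longrightarrow> restrict_keys D X = X"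
  by (induction X) auto

lemma restrict_keys_fwd: "fwd X th Y \<Longrightarrow> pkey th \<notin> D \<Longrightarrow> restrict_keys D Y = restrict_keys D X"
proof (induction rule: fwd.induct)
  case (syn X th1 X' Y th2 Y' l k)
  then show ?case using base_act_SomeD[OF syn.hyps(3)] base_act_SomeD[OF syn.hyps(4)] by auto
qed auto

lemma below_fwd: "fwd X th Y \<Longrightarrow> k \<noteq> pkey th \<Longrightarrow> below Y k = below X k"
  unfolding below_def using fwd_rtrancl_ord_iff by blast

lemma history_fwd:
  assumes "fwd X th Y" and "k \<noteq> pkey th"
  shows "history Y k = history X k"
proof -
  have "pkey th \<notin> below Y k"
    unfolding below_def using fwd_rtrancl_from_key[OF assms(1)] assms(2) by blast
  then show ?thesis
    unfolding history_def using below_fwd[OF assms] restrict_keys_fwd[OF assms(1)] by simp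
qed

(* Some a: the key labels a solo action a; None: it is shared by a synchronisation. *)
fun key_solo :: "'n proc \<Rightarrow> nat \<Rightarrow> 'n act option" where
  "key_solo Nil k = None"
| "key_solo (Pre a X) k = None"
| "key_solo (Res X l) k = key_solo X k"
| "key_solo (Sum X Y) k = (if k \<in> keys X then key_solo X k else key_solo Y k)"
| "key_solo (Par X Y) k =
     (if k \<in> keys X \<and> k \<in> keys Y then None
      else if k \<in> keys X then key_solo X k else key_solo Y k)"
| "key_solo (KPre a n X) k = (if k = n then Some a else key_solo X k)"

lemma fwd_key_solo: "fwd X th Y \<Longrightarrow>
    key_solo Y (pkey th) = map_option fst (base_act th) \<and> (\<forall>k\<in>keys X. key_solo Y k = key_solo X k)"
proof (induction rule: fwd.induct)
  case (syn X th1 X' Y th2 Y' l k)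
  then show ?case using base_act_SomeD[OF syn.hyps(3)] base_act_SomeD[OF syn.hyps(4)]
      fwd_keys[OF syn.hyps(1)] fwd_keys[OF syn.hyps(2)] by auto
qed (auto dest: fwd_keys)

(* Side conditions that let every maximal key be undone. *)
fun coherent :: "'n proc \<Rightarrow> bool" where
  "coherent Nil = True"
| "coherent (Pre a X) = (keys X = {})"
| "coherent (Res X l) =
     (coherent X \<and> (\<forall>k\<in>keys X. key_solo X k \<noteq> Some (Vis l) \<and> key_solo X k \<noteq> Some (Vis (coname l))))"
| "coherent (Sum X Y) = (coherent X \<and> coherent Y \<and> (keys X = {} \<or> keys Y = {}))"
| "coherent (Par X Y) = (coherent X \<and> coherent Y \<and>
     (\<forall>k\<in>keys X \<inter> keys Y. \<exists>l. key_solo X k = Some (Vis l) \<and> key_solo Y k = Some (Vis (coname l))))"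
| "coherent (KPre a n X) = (coherent X \<and> n \<notin> keys X)"

lemma coherent_standard: "keys X = {} \<Longrightarrow> coherent X"
  by (induction X) auto

lemma fwd_coherent_iff: "fwd X th Y \<Longrightarrow> coherent Y \<longleftrightarrow> coherent X"
proof (induction rule: fwd.induct)
  case (act X a k)
  then show ?case using coherent_standard by auto
next
  case (pre X th X' k a)
  then show ?case using fwd_keys[OF pre.hyps(1)] by auto
next
  case (res X th X' l)
  then show ?case
    using fwd_keys[OF res.hyps(1)] fwd_key_solo[OF res.hyps(1)] by (auto dest: base_act_SomeD)
next
  case (parL X th X' Y)
  then show ?case using fwd_keys[OF parL.hyps(1)] fwd_key_solo[OF parL.hyps(1)] by auto
next
  case (parR X th X' Y)
  then show ?case using fwd_keys[OF parR.hyps(1)] fwd_key_solo[OF parR.hyps(1)] by auto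
next
  case (syn X th1 X' Y th2 Y' l k)
  then show ?case using base_act_SomeD[OF syn.hyps(3)] base_act_SomeD[OF syn.hyps(4)]
      fwd_keys[OF syn.hyps(1)] fwd_keys[OF syn.hyps(2)]
      fwd_key_solo[OF syn.hyps(1)] fwd_key_solo[OF syn.hyps(2)] by auto
qed auto

lemma acyclic_add_sink:
  assumes "acyclic r" and "r' \<subseteq> r \<union> UNIV \<times> {k}" and "\<forall>x. (k, x) \<notin> r'"
  shows "acyclic r'"
proof -
  have path: "(a, b) \<in> r\<^sup>+ \<or> b = k" if "(a, b) \<in> r'\<^sup>+" for a b
    using that
  proof (induction rule: trancl_induct)
    case (step y z)
    then have "(a, y) \<in> r\<^sup>+" using assms(3) by auto
    then show ?case using step.hyps(2) assms(2) by auto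
  qed (use assms(2) in auto)
  show ?thesis
    unfolding acyclic_def
  proof (intro allI notI)
    fix x assume "(x, x) \<in> r'\<^sup>+"
    moreover from this have "x \<noteq> k" using assms(3) by (auto dest: tranclD)
    ultimately show False using path assms(1) unfolding acyclic_def by blast
  qed
qed

lemma fwd_acyclic_iff:
  assumes "fwd X th Y"
  shows "acyclic (ord Y) \<longleftrightarrow> acyclic (ord X)"
proof
  show "acyclic (ord X) \<Longrightarrow> acyclic (ord Y)"
    by (rule acyclic_add_sink[of _ _ "pkey th"])
      (use fwd_ord[OF assms] fwd_key_maximal[OF assms] in auto)
  show "acyclic (ord Y) \<Longrightarrow> acyclic (ord X)"
    by (rule acyclic_subset) (use fwd_ord[OF assms] in auto)
qed

definition well_formed :: "'n proc \<Rightarrow> bool" where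
  "well_formed X \<longleftrightarrow> coherent X \<and> acyclic (ord X)"

lemma well_formed_standard: "keys X = {} \<Longrightarrow> well_formed X"
  unfolding well_formed_def acyclic_def using coherent_standard ord_subset_keys[of X]
  by auto

lemma fwd_well_formed_iff: "fwd X th Y \<Longrightarrow> well_formed Y \<longleftrightarrow> well_formed X"
  unfolding well_formed_def using fwd_coherent_iff fwd_acyclic_iff by blast

lemma undo_maximal_key:
  "coherent X \<Longrightarrow> k \<in> keys X \<Longrightarrow> \<forall>x. (k, x) \<notin> ord X \<Longrightarrow>
    \<exists>X' th. fwd X' th X \<and> pkey th = k \<and> base_act th = map_option (\<lambda>a. (a, k)) (key_solo X k)"
proof (induction X)
  case (Res X l)
  then obtain X' th where th: "fwd X' th X" "pkey th = k"
      "base_act th = map_option (\<lambda>a. (a, k)) (key_solo X k)"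
    by auto
  have "plab_act th \<noteq> Vis l \<and> plab_act th \<noteq> Vis (coname l)"
    using Res.prems th(3) by (cases "key_solo X k") (auto dest: base_act_SomeD base_act_NoneD)
  then show ?case using fwd.res[OF th(1)] th by auto
next
  case (Sum X Y)
  show ?case
  proof (cases "k \<in> keys X")
    case True
    then show ?thesis using Sum.IH(1) Sum.prems by (fastforce intro: fwd.sumL)
  next
    case False
    then show ?thesis using Sum.IH(2) Sum.prems by (fastforce intro: fwd.sumR)
  qed
next
  case (Par X Y)
  show ?case
  proof (cases "k \<in> keys X \<and> k \<in> keys Y")
    case True
    then obtain l where "key_solo X k = Some (Vis l)" "key_solo Y k = Some (Vis (coname l))"
      using Par.prems(1) by auto
    then show ?thesis using Par.IH Par.prems True by (fastforce intro: fwd.syn)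
  next
    case False
    then show ?thesis using Par.IH Par.prems by (fastforce intro: fwd.parL fwd.parR)
  qed
next
  case (KPre a n X)
  then show ?case by (cases "k = n") (fastforce intro: fwd.act fwd.pre)+
qed simp_all

lemma maximal_key_in_upset:
  assumes "well_formed X" and "S \<subseteq> keys X" and "S \<noteq> {}"
    and "\<And>x y. x \<in> S \<Longrightarrow> (x, y) \<in> ord X \<Longrightarrow> y \<in> S"
  shows "\<exists>z\<in>S. \<forall>y. (z, y) \<notin> ord X"
proof -
  have "wf ((ord X)\<inverse>)"
    using finite_acyclic_wf_converse finite_ord assms(1) unfolding well_formed_def by blast
  then obtain z where "z \<in> S" "\<And>y. (y, z) \<in> (ord X)\<inverse> \<Longrightarrow> y \<notin> S"
    using wfE_min assms(3) by (metis ex_in_conv)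
  then show ?thesis using assms(4) by blast
qed

lemma rooted_imp_standard: "rooted X \<Longrightarrow> well_formed X \<Longrightarrow> keys X = {}"
  using maximal_key_in_upset[of X "keys X"] ord_subset_keys[of X] undo_maximal_key[of X]
  unfolding rooted_def bwd_def well_formed_def by blast

lemma standard_imp_rooted: "keys X = {} \<Longrightarrow> rooted X"
  unfolding rooted_def bwd_def using fwd_keys by blast

section \<open>Backward determinism and swapping\<close>

fun unkey :: "nat \<Rightarrow> 'n proc \<Rightarrow> 'n proc" where
  "unkey k Nil = Nil"
| "unkey k (Pre a X) = Pre a X"
| "unkey k (Res X l) = Res (unkey k X) l"
| "unkey k (Sum X Y) = Sum (unkey k X) (unkey k Y)"
| "unkey k (Par X Y) = Par (unkey k X) (unkey k Y)"
| "unkey k (KPre a n X) = (if n = k then Pre a X else KPre a n (unkey k X))"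

fun label_at :: "nat \<Rightarrow> 'n proc \<Rightarrow> 'n plab" where
  "label_at k (Res X l) = label_at k X"
| "label_at k (Sum X Y) = (if k \<in> keys X then PSum DL (label_at k X) else PSum DR (label_at k Y))"
| "label_at k (Par X Y) =
     (if k \<in> keys X \<and> k \<in> keys Y then PSyn (label_at k X) (label_at k Y)
      else if k \<in> keys X then PPar DL (label_at k X) else PPar DR (label_at k Y))"
| "label_at k (KPre a n X) = (if n = k then PAct a n else label_at k X)"
| "label_at k _ = PAct Tau k"

lemma unkey_id: "k \<notin> keys X \<Longrightarrow> unkey k X = X"
  by (induction X) auto

lemma fwd_source_label: "fwd A th C \<Longrightarrow> A = unkey (pkey th) C \<and> th = label_at (pkey th) C"
proof (induction rule: fwd.induct)
  case (syn X th1 X' Y th2 Y' l k)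
  then show ?case using base_act_pkey[OF syn.hyps(3)] base_act_pkey[OF syn.hyps(4)]
      fwd_keys[OF syn.hyps(1)] fwd_keys[OF syn.hyps(2)] by auto
qed (auto simp: unkey_id dest: fwd_keys)

inductive_cases fwd_to_Nil: "fwd Z th Nil"
inductive_cases fwd_to_Pre: "fwd Z th (Pre a X)"
inductive_cases fwd_to_KPre: "fwd Z th (KPre a n X)"
inductive_cases fwd_to_Res: "fwd Z th (Res X l)"
inductive_cases fwd_to_Sum: "fwd Z th (Sum X Y)"
inductive_cases fwd_to_Par: "fwd Z th (Par X Y)"
inductive_cases fwd_from_KPre: "fwd (KPre a n X) th Z"
inductive_cases fwd_from_Res: "fwd (Res X l) th Z"
inductive_cases fwd_from_Sum: "fwd (Sum X Y) th Z"
inductive_cases fwd_from_Par: "fwd (Par X Y) th Z"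

definition swappable :: "'n proc \<Rightarrow> bool" where
  "swappable A \<longleftrightarrow> (\<forall>A' lam th B. fwd A' lam A \<longrightarrow> fwd A th B \<longrightarrow> (\<forall>x. (pkey lam, x) \<notin> ord B) \<longrightarrow>
     (\<exists>B'. fwd A' th B' \<and> fwd B' lam B \<and> indep th lam))"

lemma swappable_KPre:
  assumes "swappable X"
  shows "swappable (KPre a n X)"
  unfolding swappable_def
proof (intro allI impI)
  fix A' lam th B
  assume undo: "fwd A' lam (KPre a n X)" and "fwd (KPre a n X) th B"
    and maximal: "\<forall>x. (pkey lam, x) \<notin> ord B"
  then obtain X1 where X1: "B = KPre a n X1" "fwd X th X1" "pkey th \<noteq> n"
    by (auto elim: fwd_from_KPre)
  from undo show "\<exists>B'. fwd A' th B' \<and> fwd B' lam B \<and> indep th lam"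
  proof (cases rule: fwd_to_KPre[consumes 1])
    case 1
    then show ?thesis using maximal X1 fwd_keys[OF X1(2)] by auto
  next
    case (2 X0)
    then obtain X0' where "fwd X0 th X0'" "fwd X0' lam X1" "indep th lam"
      using assms maximal X1 unfolding swappable_def by force
    then show ?thesis using 2 X1 fwd.pre by metis
  qed
qed

lemma swappable_Res:
  assumes "swappable X"
  shows "swappable (Res X l)"
  unfolding swappable_def
proof (intro allI impI)
  fix A' lam th B
  assume undo: "fwd A' lam (Res X l)" and "fwd (Res X l) th B"
    and maximal: "\<forall>x. (pkey lam, x) \<notin> ord B"
  obtain X1 where "B = Res X1 l" "fwd X th X1" "plab_act th \<noteq> Vis l" "plab_act th \<noteq> Vis (coname l)"
    using \<open>fwd (Res X l) th B\<close> by (rule fwd_from_Res)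
  moreover obtain X0 where "A' = Res X0 l" "fwd X0 lam X"
      "plab_act lam \<noteq> Vis l" "plab_act lam \<noteq> Vis (coname l)"
    using undo by (rule fwd_to_Res)
  moreover from calculation obtain X0' where "fwd X0 th X0'" "fwd X0' lam X1" "indep th lam"
    using assms maximal unfolding swappable_def by force
  ultimately show "\<exists>B'. fwd A' th B' \<and> fwd B' lam B \<and> indep th lam"
    using fwd.res by metis
qed

lemma swappable_Sum:
  assumes "swappable X" and "swappable Y"
  shows "swappable (Sum X Y)"
  unfolding swappable_def
proof (intro allI impI)
  fix A' lam th B
  assume undo: "fwd A' lam (Sum X Y)" and "do": "fwd (Sum X Y) th B"
    and maximal: "\<forall>x. (pkey lam, x) \<notin> ord B"
  from undo show "\<exists>B'. fwd A' th B' \<and> fwd B' lam B \<and> indep th lam"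
  proof (cases rule: fwd_to_Sum[consumes 1])
    case (1 X0 l')
    with "do" obtain t' X1 where "th = PSum DL t'" "B = Sum X1 Y" "fwd X t' X1"
      using fwd_keys by (cases rule: fwd_from_Sum[consumes 1]) blast+
    moreover from calculation obtain X0' where "fwd X0 t' X0'" "fwd X0' l' X1" "indep t' l'"
      using assms(1) maximal 1 unfolding swappable_def by force
    ultimately show ?thesis using 1 fwd.sumL indep.C1 by metis
  next
    case (2 Y0 l')
    with "do" obtain t' Y1 where "th = PSum DR t'" "B = Sum X Y1" "fwd Y t' Y1"
      using fwd_keys by (cases rule: fwd_from_Sum[consumes 1]) blast+
    moreover from calculation obtain Y0' where "fwd Y0 t' Y0'" "fwd Y0' l' Y1" "indep t' l'"
      using assms(2) maximal 2 unfolding swappable_def by force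
    ultimately show ?thesis using 2 fwd.sumR indep.C1 by metis
  qed
qed

lemma swap_Par_undo_left:
  assumes sw: "swappable X" and undo: "fwd X0 l' X" "pkey l' \<notin> keys Y"
    and "do": "fwd (Par X Y) th B" and maximal: "\<forall>x. (pkey l', x) \<notin> ord B"
  shows "\<exists>B'. fwd (Par X0 Y) th B' \<and> fwd B' (PPar DL l') B \<and> indep th (PPar DL l')"
proof -
  have swap: "\<exists>X0'. fwd X0 t X0' \<and> fwd X0' l' X1 \<and> indep t l'"
    if "fwd X t X1" "\<forall>x. (pkey l', x) \<notin> ord X1" for t X1
    using sw undo(1) that unfolding swappable_def by blast
  have distinct: "pkey th \<noteq> pkey l'"
    using fwd_keys[OF undo(1)] fwd_keys[OF "do"] by auto
  from "do" show ?thesis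
  proof (cases rule: fwd_from_Par[consumes 1])
    case (1 t X1)
    then obtain X0' where "fwd X0 t X0'" "fwd X0' l' X1" "indep t l'"
      using swap[OF \<open>fwd X t X1\<close>] maximal by auto
    then show ?thesis using 1 undo(2) by (metis fwd.parL indep.P1)
  next
    case (2 t Y1)
    have "pkey t \<notin> keys X0" "pkey l' \<notin> keys Y1"
      using 2 undo distinct fwd_keys[OF undo(1)] fwd_keys[OF \<open>fwd Y t Y1\<close>] by auto
    then show ?thesis
      using 2 fwd.parR[OF \<open>fwd Y t Y1\<close>] fwd.parL[OF undo(1)] indep.P2[of t l' DR] distinct
      by (intro exI[of _ "Par X0 Y1"]) auto
  next
    case (3 t1 X1 t2 Y1 l k)
    then obtain X0' where "fwd X0 t1 X0'" "fwd X0' l' X1" "indep t1 l'"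
      using swap[OF \<open>fwd X t1 X1\<close>] maximal by auto
    moreover have "pkey l' \<notin> keys Y1"
      using 3 undo(2) distinct fwd_keys[OF \<open>fwd Y t2 Y1\<close>]
        base_act_pkey[OF \<open>base_act t1 = _\<close>] base_act_pkey[OF \<open>base_act t2 = _\<close>] by auto
    ultimately show ?thesis
      using 3 fwd.syn fwd.parL indep.S2[of DL t1 t2 l'] by (metis sel.simps(1))
  qed
qed

lemma swap_Par_undo_right:
  assumes sw: "swappable Y" and undo: "fwd Y0 l' Y" "pkey l' \<notin> keys X"
    and "do": "fwd (Par X Y) th B" and maximal: "\<forall>x. (pkey l', x) \<notin> ord B"
  shows "\<exists>B'. fwd (Par X Y0) th B' \<and> fwd B' (PPar DR l') B \<and> indep th (PPar DR l')"
proof -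
  have swap: "\<exists>Y0'. fwd Y0 t Y0' \<and> fwd Y0' l' Y1 \<and> indep t l'"
    if "fwd Y t Y1" "\<forall>x. (pkey l', x) \<notin> ord Y1" for t Y1
    using sw undo(1) that unfolding swappable_def by blast
  have distinct: "pkey th \<noteq> pkey l'"
    using fwd_keys[OF undo(1)] fwd_keys[OF "do"] by auto
  from "do" show ?thesis
  proof (cases rule: fwd_from_Par[consumes 1])
    case (1 t X1)
    have "pkey t \<notin> keys Y0" "pkey l' \<notin> keys X1"
      using 1 undo distinct fwd_keys[OF undo(1)] fwd_keys[OF \<open>fwd X t X1\<close>] by auto
    then show ?thesis
      using 1 fwd.parL[OF \<open>fwd X t X1\<close>] fwd.parR[OF undo(1)] indep.P2[of t l' DL] distinct
      by (intro exI[of _ "Par X1 Y0"]) auto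
  next
    case (2 t Y1)
    then obtain Y0' where "fwd Y0 t Y0'" "fwd Y0' l' Y1" "indep t l'"
      using swap[OF \<open>fwd Y t Y1\<close>] maximal by auto
    then show ?thesis using 2 undo(2) by (metis fwd.parR indep.P1)
  next
    case (3 t1 X1 t2 Y1 l k)
    then obtain Y0' where "fwd Y0 t2 Y0'" "fwd Y0' l' Y1" "indep t2 l'"
      using swap[OF \<open>fwd Y t2 Y1\<close>] maximal by auto
    moreover have "pkey l' \<notin> keys X1"
      using 3 undo(2) distinct fwd_keys[OF \<open>fwd X t1 X1\<close>] by auto
    ultimately show ?thesis
      using 3 fwd.syn fwd.parR indep.S2[of DR t1 t2 l'] by (metis sel.simps(2))
  qed
qed

lemma swap_Par_undo_sync:
  assumes swX: "swappable X" and swY: "swappable Y"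
    and undo: "fwd X0 l1 X" "fwd Y0 l2 Y" "base_act l1 = Some (Vis l, k)"
      "base_act l2 = Some (Vis (coname l), k)"
    and "do": "fwd (Par X Y) th B" and maximal: "\<forall>x. (k, x) \<notin> ord B"
  shows "\<exists>B'. fwd (Par X0 Y0) th B' \<and> fwd B' (PSyn l1 l2) B \<and> indep th (PSyn l1 l2)"
proof -
  have keys: "pkey l1 = k" "pkey l2 = k"
    using base_act_pkey[OF undo(3)] base_act_pkey[OF undo(4)] by auto
  have swapX: "\<exists>X0'. fwd X0 t X0' \<and> fwd X0' l1 X1 \<and> indep t l1"
    if "fwd X t X1" "\<forall>x. (k, x) \<notin> ord X1" for t X1
    using swX undo(1) that(1) that(2)[folded keys(1)] unfolding swappable_def by blast
  have swapY: "\<exists>Y0'. fwd Y0 t Y0' \<and> fwd Y0' l2 Y1 \<and> indep t l2"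
    if "fwd Y t Y1" "\<forall>x. (k, x) \<notin> ord Y1" for t Y1
    using swY undo(2) that(1) that(2)[folded keys(2)] unfolding swappable_def by blast
  from "do" show ?thesis
  proof (cases rule: fwd_from_Par[consumes 1])
    case (1 t X1)
    then obtain X0' where "fwd X0 t X0'" "fwd X0' l1 X1" "indep t l1"
      using swapX[OF \<open>fwd X t X1\<close>] maximal by auto
    moreover have "pkey t \<notin> keys Y0" using 1 fwd_keys[OF undo(2)] by auto
    ultimately show ?thesis
      using 1 fwd.parL fwd.syn[OF _ undo(2-4)] indep.S1[of t DL l1 l2] by (metis sel.simps(1))
  next
    case (2 t Y1)
    then obtain Y0' where "fwd Y0 t Y0'" "fwd Y0' l2 Y1" "indep t l2"
      using swapY[OF \<open>fwd Y t Y1\<close>] maximal by auto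
    moreover have "pkey t \<notin> keys X0" using 2 fwd_keys[OF undo(1)] by auto
    ultimately show ?thesis
      using 2 fwd.parR fwd.syn[OF undo(1) _ undo(3-4)] indep.S1[of t DR l1 l2]
      by (metis sel.simps(2))
  next
    case (3 t1 X1 t2 Y1 l' k')
    then obtain X0' Y0' where "fwd X0 t1 X0'" "fwd X0' l1 X1" "indep t1 l1"
        "fwd Y0 t2 Y0'" "fwd Y0' l2 Y1" "indep t2 l2"
      using swapX[OF \<open>fwd X t1 X1\<close>] swapY[OF \<open>fwd Y t2 Y1\<close>] maximal by fastforce
    then show ?thesis using 3 fwd.syn undo(3-4) indep.S3 by metis
  qed
qed

lemma swappable_Par:
  assumes "swappable X" and "swappable Y"
  shows "swappable (Par X Y)"
  unfolding swappable_def
proof (intro allI impI)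
  fix A' lam th B
  assume undo: "fwd A' lam (Par X Y)" and "do": "fwd (Par X Y) th B"
    and maximal: "\<forall>x. (pkey lam, x) \<notin> ord B"
  from undo show "\<exists>B'. fwd A' th B' \<and> fwd B' lam B \<and> indep th lam"
  proof (cases rule: fwd_to_Par[consumes 1])
    case (1 X0 l')
    then show ?thesis using swap_Par_undo_left[OF assms(1) _ _ "do"] maximal by simp
  next
    case (2 Y0 l')
    then show ?thesis using swap_Par_undo_right[OF assms(2) _ _ "do"] maximal by simp
  next
    case (3 X0 l1 Y0 l2 l k)
    then show ?thesis
      using swap_Par_undo_sync[OF assms 3(3-6) "do"] maximal base_act_pkey[OF 3(5)] by simp
  qed
qed

lemma swappable_all: "swappable A"
proof (induction A)
  case Nil
  then show ?case unfolding swappable_def by (auto elim: fwd_to_Nil)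
next
  case (Pre a X)
  then show ?case unfolding swappable_def by (auto elim: fwd_to_Pre)
qed (auto intro: swappable_KPre swappable_Res swappable_Sum swappable_Par)

lemma fwd_swap:
  "fwd A' lam A \<Longrightarrow> fwd A th B \<Longrightarrow> \<forall>x. (pkey lam, x) \<notin> ord B \<Longrightarrow>
    \<exists>B'. fwd A' th B' \<and> fwd B' lam B \<and> indep th lam"
  using swappable_all unfolding swappable_def by blast

lemma trans_sel_simps [simp]:
  "src (A, th, d, C) = A" "lbl (A, th, d, C) = th" "isfwd (A, th, d, C) = d" "tgt (A, th, d, C) = C"
  by (simp_all add: src_def lbl_def isfwd_def tgt_def)

lemma tinv_simps [simp]: "tinv (A, th, d, C) = (C, th, \<not> d, A)"
  by (simp add: tinv_def)

lemma tinv_tinv [simp]: "tinv (tinv t) = t"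
  by (cases t) simp

lemma valid_iff: "valid (A, th, d, C) \<longleftrightarrow> (if d then fwd A th C else fwd C th A)"
  by (simp add: valid_def bwd_def)

lemma valid_tinv [simp]: "valid (tinv t) \<longleftrightarrow> valid t"
  by (cases t) (simp add: valid_iff)

lemma chain_snoc: "chain P ts X \<Longrightarrow> valid t \<Longrightarrow> src t = X \<Longrightarrow> chain P (ts @ [t]) (tgt t)"
  by (induction ts arbitrary: P) auto

lemma chain_well_formed_iff: "chain P ts X \<Longrightarrow> well_formed P \<longleftrightarrow> well_formed X"
proof (induction ts arbitrary: P)
  case (Cons v ts)
  obtain A th d C where "v = (A, th, d, C)" by (cases v)
  then show ?case using Cons fwd_well_formed_iff by (auto simp: valid_iff split: if_splits)
qed simp

lemma chain_from_standard_well_formed: "keys P = {} \<Longrightarrow> chain P ts X \<Longrightarrow> well_formed X"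
  using chain_well_formed_iff well_formed_standard by blast

lemma diamond_tinv: "diamond t t' \<Longrightarrow> diamond (tinv t') (tinv t)"
proof (induction rule: diamond.induct)
  case (1 P tht dt Q thu du R S)
  have "indep_trans (S, tht, \<not> dt, R) (S, thu, \<not> du, Q)"
    using 1(3,5) valid_tinv[of "(Q, thu, du, S)"]
    by (auto simp: indep_trans_def connected_def intro!: exI[of _ "[(S, thu, \<not> du, Q)]"])
  then show ?case
    using diamond.intros[of S tht "\<not> dt" R thu "\<not> du" Q P] 1(1-4)
      valid_tinv[of "(P, tht, dt, Q)"] valid_tinv[of "(P, thu, du, R)"]
      valid_tinv[of "(Q, thu, du, S)"] valid_tinv[of "(R, tht, dt, S)"]
    by simp
qed

lemma diamond_valid: "diamond t t' \<Longrightarrow> valid t \<and> valid t'"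
  by (induction rule: diamond.induct) auto

lemma diamond_lbl: "diamond t t' \<Longrightarrow> lbl t' = lbl t \<and> isfwd t' = isfwd t"
  by (induction rule: diamond.induct) simp

lemma tsim_refl: "valid t \<Longrightarrow> tsim t t"
  by (simp add: tsim_def)

lemma tsim_sym: "tsim t t' \<Longrightarrow> tsim t' t"
  by (auto simp: tsim_def intro: equivclp_sym)

lemma tsim_trans: "tsim t t' \<Longrightarrow> tsim t' t'' \<Longrightarrow> tsim t t''"
  by (auto simp: tsim_def intro: equivclp_trans)

lemma diamond_imp_tsim: "diamond t t' \<Longrightarrow> tsim t t'"
  using diamond_valid[of t t'] by (auto simp: tsim_def)

lemma tsim_tinv: "tsim t t' \<Longrightarrow> tsim (tinv t) (tinv t')"
proof -
  assume "tsim t t'"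
  then have "equivclp diamond t t'" and "valid t" "valid t'"
    by (simp_all add: tsim_def)
  from this(1) have "equivclp diamond (tinv t) (tinv t')"
  proof (induction rule: equivclp_induct)
    case (step y z)
    then show ?case using diamond_tinv equivclp_into_equivclp by metis
  qed simp
  then show ?thesis using \<open>valid t\<close> \<open>valid t'\<close> by (simp add: tsim_def)
qed

lemma tsim_lbl: "tsim t t' \<Longrightarrow> lbl t' = lbl t \<and> isfwd t' = isfwd t"
proof -
  assume "tsim t t'"
  then have "equivclp diamond t t'" by (simp add: tsim_def)
  then show ?thesis
    by (induction rule: equivclp_induct) (auto dest: diamond_lbl)
qed

lemma tsim_undo_maximal:
  assumes "fwd A th B" and "well_formed A" and "z \<in> keys A" and "\<forall>y. (z, y) \<notin> ord B"
  shows "\<exists>A' lam B'. fwd A' th B' \<and> fwd B' lam B \<and> pkey lam = z \<and> well_formed A' \<and>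
    tsim (A, th, True, B) (A', th, True, B')"
proof -
  have "\<forall>y. (z, y) \<notin> ord A" using assms(4) fwd_ord[OF assms(1)] by blast
  then obtain A' lam where undo: "fwd A' lam A" "pkey lam = z"
    using undo_maximal_key assms(2,3) unfolding well_formed_def by blast
  then obtain B' where swap: "fwd A' th B'" "fwd B' lam B" "indep th lam"
    using fwd_swap[OF undo(1) assms(1)] assms(4) by blast
  have "diamond (A, th, True, B) (A', th, True, B')"
    using assms(1) undo(1) swap
    by (intro diamond.intros[of A th True B lam False A' B'])
      (auto simp: valid_iff indep_trans_def connected_def intro!: exI[of _ "[(A, lam, False, A')]"])
  then show ?thesis
    using swap undo fwd_well_formed_iff[OF undo(1)] assms(2) diamond_imp_tsim by blast
qed

(* Undo, one at a time, the maximal keys of B outside the history of pkey th: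
  each step is a diamond. *)
lemma tsim_history_target:
  assumes "fwd A th B" and "well_formed A"
  shows "\<exists>A0. tsim (A, th, True, B) (A0, th, True, history B (pkey th))"
  using assms
proof (induction "card (keys B - below B (pkey th))" arbitrary: A B rule: less_induct)
  case less
  let ?k = "pkey th"
  let ?S = "keys B - below B ?k"
  show ?case
  proof (cases "?S = {}")
    case True
    then have "history B ?k = B" unfolding history_def by (simp add: restrict_keys_id)
    then show ?thesis using less.prems tsim_refl[of "(A, th, True, B)"] by (auto simp: valid_iff)
  next
    case False
    have "well_formed B" using fwd_well_formed_iff less.prems by blast
    moreover have "y \<in> ?S" if "x \<in> ?S" "(x, y) \<in> ord B" for x y
      using that ord_subset_keys unfolding below_def by (auto intro: converse_rtrancl_into_rtrancl)
    ultimately obtain z where z: "z \<in> ?S" "\<forall>y. (z, y) \<notin> ord B"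
      using maximal_key_in_upset[of B ?S] False by blast
    have "z \<noteq> ?k" using z(1) by (auto simp: below_def)
    then have "z \<in> keys A" using z(1) fwd_keys[OF less.prems(1)] by auto
    then obtain A' lam B' where step: "fwd A' th B'" "fwd B' lam B" "pkey lam = z" "well_formed A'"
        "tsim (A, th, True, B) (A', th, True, B')"
      using tsim_undo_maximal less.prems z(2) by blast
    have "keys B' - below B' ?k = ?S - {z}"
      using fwd_keys[OF step(2)] below_fwd[OF step(2)] step(3) \<open>z \<noteq> ?k\<close> z(1) by auto
    then have "card (keys B' - below B' ?k) < card ?S"
      using card_Diff1_less[OF finite_Diff[OF finite_keys] z(1)] by simp
    then obtain A0 where "tsim (A', th, True, B') (A0, th, True, history B' ?k)"
      using less.hyps step(1,4) by blast
    moreover have "history B' ?k = history B ?k"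
      using history_fwd[OF step(2)] step(3) \<open>z \<noteq> ?k\<close> by simp
    ultimately show ?thesis using tsim_trans[OF step(5)] by (metis (no_types))
  qed
qed

lemma tsim_of_same_history:
  assumes "fwd A1 th1 B1" "well_formed A1" and "fwd A2 th2 B2" "well_formed A2"
    and "pkey th1 = pkey th2" and "history B1 (pkey th1) = history B2 (pkey th2)"
  shows "tsim (A1, th1, True, B1) (A2, th2, True, B2)"
proof -
  obtain C1 where C1: "tsim (A1, th1, True, B1) (C1, th1, True, history B1 (pkey th1))"
    using tsim_history_target assms(1,2) by blast
  obtain C2 where C2: "tsim (A2, th2, True, B2) (C2, th2, True, history B2 (pkey th2))"
    using tsim_history_target assms(3,4) by blast
  have "fwd C1 th1 (history B1 (pkey th1))" "fwd C2 th2 (history B1 (pkey th1))"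
    using C1 C2 assms(6) by (simp_all add: tsim_def valid_iff)
  then have "C1 = C2 \<and> th1 = th2" using fwd_source_label assms(5) by metis
  then have "tsim (C1, th1, True, history B1 (pkey th1)) (A2, th2, True, B2)"
    using tsim_sym[OF C2] assms(6) by simp
  then show ?thesis using tsim_trans[OF C1] by blast
qed

section \<open>Events of reachable processes\<close>

lemma eclass_eq: "tsim t t' \<Longrightarrow> eclass t = eclass t'"
  unfolding eclass_def using tsim_sym tsim_trans by blast

lemma eclass_lbl: "t \<in> eclass t0 \<Longrightarrow> lbl t = lbl t0 \<and> isfwd t = isfwd t0"
  unfolding eclass_def using tsim_lbl by blast

lemma mem_eclass_self: "valid t \<Longrightarrow> t \<in> eclass t"
  by (simp add: eclass_def tsim_refl)

lemma tsim_some_eclass: "valid t \<Longrightarrow> tsim t (SOME t'. t' \<in> eclass t)"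
  using someI[of "\<lambda>t'. t' \<in> eclass t", OF mem_eclass_self] by (simp add: eclass_def)

lemma ev_lab_eclass: "valid t \<Longrightarrow> ev_lab (eclass t) = plab_act (lbl t)"
  unfolding ev_lab_def by (simp add: tsim_lbl[OF tsim_some_eclass])

lemma ev_key_eclass: "valid t \<Longrightarrow> ev_key (eclass t) = pkey (lbl t)"
  unfolding ev_key_def by (simp add: tsim_lbl[OF tsim_some_eclass])

lemma ev_bar_eclass: "valid t \<Longrightarrow> ev_bar (eclass t) = eclass (tinv t)"
  unfolding ev_bar_def by (simp add: eclass_eq[OF tsim_tinv[OF tsim_some_eclass]])

lemma mem_eclass_tinv: "u \<in> eclass (tinv t) \<longleftrightarrow> tinv u \<in> eclass t"
  unfolding eclass_def using tsim_tinv[of "tinv t" u] tsim_tinv[of t "tinv u"] by auto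

(* A path-free description of ev X, see ev_eq_occurs. *)
definition occurs :: "'n proc \<Rightarrow> 'n trans set \<Rightarrow> bool" where
  "occurs X e \<longleftrightarrow> (\<exists>A th B. (A, th, True, B) \<in> e \<and> well_formed A \<and> pkey th \<in> keys X \<and>
     history B (pkey th) = history X (pkey th))"

lemma occurs_eclass:
  "occurs X (eclass t0) \<longleftrightarrow> pkey (lbl t0) \<in> keys X \<and> (\<exists>A B. (A, lbl t0, True, B) \<in> eclass t0 \<and>
     well_formed A \<and> history B (pkey (lbl t0)) = history X (pkey (lbl t0)))"
proof -
  have "th = lbl t0" if "(A, th, True, B) \<in> eclass t0" for A th B
    using eclass_lbl[OF that] by simp
  then show ?thesis unfolding occurs_def by blast
qed

lemma occurs_fwd_other_key:
  assumes "fwd A th C" and "pkey th \<noteq> pkey (lbl t0)"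
  shows "occurs C (eclass t0) \<longleftrightarrow> occurs A (eclass t0)"
proof -
  have "history C (pkey (lbl t0)) = history A (pkey (lbl t0))"
    using history_fwd[OF assms(1)] assms(2) by simp
  moreover have "pkey (lbl t0) \<in> keys C \<longleftrightarrow> pkey (lbl t0) \<in> keys A"
    using fwd_keys[OF assms(1)] assms(2) by auto
  ultimately show ?thesis unfolding occurs_eclass by simp
qed

lemma occurs_fwd_same_key:
  assumes "fwd A th C" and "well_formed A" and key: "pkey th = pkey (lbl t0)"
  shows "\<not> occurs A (eclass t0)" and "occurs C (eclass t0) \<longleftrightarrow> (A, th, True, C) \<in> eclass t0"
proof -
  show "\<not> occurs A (eclass t0)"
    using fwd_keys[OF assms(1)] key by (simp add: occurs_eclass)
  show "occurs C (eclass t0) \<longleftrightarrow> (A, th, True, C) \<in> eclass t0"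
  proof
    assume "occurs C (eclass t0)"
    then obtain A1 B1 where t1: "(A1, lbl t0, True, B1) \<in> eclass t0" "well_formed A1"
        "history B1 (pkey th) = history C (pkey th)"
      using key by (auto simp: occurs_eclass)
    then have "fwd A1 (lbl t0) B1"
      by (simp add: eclass_def tsim_def valid_iff)
    then have "tsim (A1, lbl t0, True, B1) (A, th, True, C)"
      using tsim_of_same_history[OF _ t1(2) assms(1,2)] t1(3) key by simp
    then show "(A, th, True, C) \<in> eclass t0"
      using t1(1) tsim_trans unfolding eclass_def by blast
  next
    assume "(A, th, True, C) \<in> eclass t0"
    moreover from this have "th = lbl t0" using eclass_lbl by fastforce
    ultimately show "occurs C (eclass t0)"
      using assms(2) fwd_keys[OF assms(1)] by (auto simp: occurs_eclass)
  qed
qed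

lemma occurs_step:
  assumes "valid v" and "well_formed (src v)" and "valid t0" and "isfwd t0"
  shows "of_bool (occurs (tgt v) (eclass t0)) - of_bool (occurs (src v) (eclass t0)) =
    (if v \<in> eclass t0 then 1 else if v \<in> ev_bar (eclass t0) then -1 else (0 :: int))"
proof -
  obtain A th d C where v: "v = (A, th, d, C)" by (cases v)
  have fwd_members: "isfwd u" if "u \<in> eclass t0" for u
    using eclass_lbl[OF that] assms(4) by simp
  have bar: "u \<in> ev_bar (eclass t0) \<longleftrightarrow> tinv u \<in> eclass t0" for u
    using ev_bar_eclass[OF assms(3)] mem_eclass_tinv by simp
  have other_key: "(X, th, True, Y) \<notin> eclass t0" if "pkey th \<noteq> pkey (lbl t0)" for X Y
    using that eclass_lbl by fastforce
  show ?thesis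
  proof (cases d)
    case True
    then have "fwd A th C" "v \<notin> ev_bar (eclass t0)"
      using assms(1) v bar fwd_members by (auto simp: valid_iff)
    then show ?thesis
      using occurs_fwd_same_key[of A th C t0] occurs_fwd_other_key[of A th C t0] other_key
        assms(2) v True by (cases "pkey th = pkey (lbl t0)") auto
  next
    case False
    then have undo: "fwd C th A" "v \<notin> eclass t0"
      using assms(1) v fwd_members by (auto simp: valid_iff)
    moreover have "well_formed C"
      using assms(2) v fwd_well_formed_iff[OF undo(1)] by simp
    ultimately show ?thesis
      using occurs_fwd_same_key[of C th A t0] occurs_fwd_other_key[of C th A t0] other_key
        bar[of v] v False by (cases "pkey th = pkey (lbl t0)") auto
  qed
qed

lemma sharp_Cons:
  "sharp (v # ts) e = (if v \<in> e then 1 else if v \<in> ev_bar e then -1 else 0) + sharp ts e"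
  by (simp add: sharp_def)

lemma sharp_chain:
  assumes "chain P ts X" and "well_formed X" and "valid t0" and "isfwd t0"
  shows "sharp ts (eclass t0) = of_bool (occurs X (eclass t0)) - of_bool (occurs P (eclass t0))"
  using assms(1)
proof (induction ts arbitrary: P)
  case Nil
  then show ?case by (simp add: sharp_def)
next
  case (Cons v ts)
  then have v: "valid v" "src v = P" "chain (tgt v) ts X" by simp_all
  then have "well_formed (src v)"
    using chain_well_formed_iff[OF Cons.prems] assms(2) by simp
  then show ?case
    using Cons.IH[OF v(3)] occurs_step[OF v(1) _ assms(3,4)] v(2) by (simp add: sharp_Cons)
qed

lemma not_occurs_standard: "keys P = {} \<Longrightarrow> \<not> occurs P e"
  by (simp add: occurs_def)

lemma ev_eq_occurs:
  assumes "keys P = {}" and "chain P ts X"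
  shows "ev X = {e. fwd_event e \<and> occurs X e}"
proof (intro set_eqI iffI)
  have wf: "well_formed X" using chain_from_standard_well_formed assms by blast
  fix e
  show "e \<in> ev X" if e: "e \<in> {e. fwd_event e \<and> occurs X e}"
  proof -
    obtain t0 where "valid t0" "isfwd t0" "e = eclass t0" "occurs X e"
      using e unfolding fwd_event_def by blast
    then have "sharp ts e > 0"
      using sharp_chain[OF assms(2) wf] not_occurs_standard[OF assms(1)] by simp
    then show ?thesis
      using e assms standard_imp_rooted unfolding ev_def by blast
  qed
  show "e \<in> {e. fwd_event e \<and> occurs X e}" if e: "e \<in> ev X"
  proof -
    obtain P' ts' t0 where P': "rooted P'" "chain P' ts' X" "sharp ts' e > 0"
      and t0: "valid t0" "isfwd t0" "e = eclass t0"
      using e unfolding ev_def fwd_event_def by blast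
    have "keys P' = {}"
      using rooted_imp_standard P'(1) chain_well_formed_iff[OF P'(2)] wf by blast
    then have "occurs X e"
      using sharp_chain[OF P'(2) wf t0(1,2)] P'(3) not_occurs_standard t0(3) by fastforce
    then show ?thesis using e unfolding ev_def by blast
  qed
qed

lemma ev_standard: "keys P = {} \<Longrightarrow> ev P = {}"
  using ev_eq_occurs[of P "[]"] by (simp add: not_occurs_standard)

lemma occurs_fwd:
  assumes "fwd X th Y" and "well_formed X"
  shows "occurs Y (eclass t0) \<longleftrightarrow> occurs X (eclass t0) \<or> eclass t0 = eclass (X, th, True, Y)"
    and "eclass t0 = eclass (X, th, True, Y) \<Longrightarrow> \<not> occurs X (eclass t0)"
proof -
  let ?t = "(X, th, True, Y)"
  have "valid ?t" using assms(1) by (simp add: valid_iff)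
  then have mem: "?t \<in> eclass t0 \<longleftrightarrow> eclass t0 = eclass ?t"
    using eclass_eq mem_eclass_self unfolding eclass_def by blast
  have key: "pkey th = pkey (lbl t0)" if "eclass t0 = eclass ?t"
    using eclass_lbl[of ?t t0] mem that by simp
  show "\<not> occurs X (eclass t0)" if "eclass t0 = eclass ?t"
    using occurs_fwd_same_key(1)[OF assms key[OF that]] .
  show "occurs Y (eclass t0) \<longleftrightarrow> occurs X (eclass t0) \<or> eclass t0 = eclass ?t"
  proof (cases "pkey th = pkey (lbl t0)")
    case True
    then show ?thesis using occurs_fwd_same_key[OF assms True] mem by simp
  next
    case False
    then show ?thesis using occurs_fwd_other_key[OF assms(1) False] key by auto
  qed
qed

lemma ev_fwd:
  assumes "keys P = {}" and "chain P ts X" and "fwd X th Y"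
  shows "ev Y = insert (eclass (X, th, True, Y)) (ev X)" and "eclass (X, th, True, Y) \<notin> ev X"
proof -
  let ?t = "(X, th, True, Y)"
  have wf: "well_formed X" using chain_from_standard_well_formed assms(1,2) by blast
  have valid: "valid ?t" using assms(3) by (simp add: valid_iff)
  have "chain P (ts @ [?t]) Y" using chain_snoc[OF assms(2) valid] by simp
  then have evY: "ev Y = {e. fwd_event e \<and> occurs Y e}" using ev_eq_occurs assms(1) by blast
  have evX: "ev X = {e. fwd_event e \<and> occurs X e}" using ev_eq_occurs assms(1,2) by blast
  have "fwd_event (eclass ?t)" using valid unfolding fwd_event_def by auto
  moreover have "occurs Y e \<longleftrightarrow> occurs X e \<or> e = eclass ?t" if fe: "fwd_event e" for e
  proof -
    obtain t0 where "e = eclass t0" using fe unfolding fwd_event_def by blast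
    then show ?thesis using occurs_fwd(1)[OF assms(3) wf, of t0] by simp
  qed
  ultimately show "ev Y = insert (eclass ?t) (ev X)"
    unfolding evX evY by auto
  show "eclass ?t \<notin> ev X"
    unfolding evX using occurs_fwd(2)[OF assms(3) wf] by simp
qed

section \<open>The key order through undoing\<close>

inductive undoable_before :: "'n proc \<Rightarrow> nat \<Rightarrow> nat \<Rightarrow> bool" where
  undo: "fwd X' th X \<Longrightarrow> pkey th = k1 \<Longrightarrow> undoable_before X k1 k2"
| step: "fwd X' th X \<Longrightarrow> pkey th \<noteq> k2 \<Longrightarrow> undoable_before X' k1 k2 \<Longrightarrow> undoable_before X k1 k2"

lemma undoable_before_not_below:
  "undoable_before X k1 k2 \<Longrightarrow> k1 \<noteq> k2 \<Longrightarrow> k2 \<in> keys X \<Longrightarrow> (k1, k2) \<notin> (ord X)\<^sup>*"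
proof (induction rule: undoable_before.induct)
  case (undo X' th X k1 k2)
  then show ?case using fwd_rtrancl_from_key by blast
next
  case (step X' th X k2 k1)
  then show ?case using fwd_rtrancl_ord_iff[OF step.hyps(1)] fwd_keys[OF step.hyps(1)] by auto
qed

lemma undoable_before_if_not_below:
  "well_formed X \<Longrightarrow> k1 \<in> keys X \<Longrightarrow> k1 \<noteq> k2 \<Longrightarrow> (k1, k2) \<notin> (ord X)\<^sup>* \<Longrightarrow>
    undoable_before X k1 k2"
proof (induction "card {x \<in> keys X. (k1, x) \<in> (ord X)\<^sup>*}" arbitrary: X rule: less_induct)
  case less
  let ?U = "{x \<in> keys X. (k1, x) \<in> (ord X)\<^sup>*}"
  have "y \<in> ?U" if "x \<in> ?U" "(x, y) \<in> ord X" for x y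
    using that ord_subset_keys by auto
  then obtain z where z: "z \<in> ?U" "\<forall>y. (z, y) \<notin> ord X"
    using maximal_key_in_upset[of X ?U] less.prems(1,2) by blast
  then obtain X' th where undo: "fwd X' th X" "pkey th = z"
    using undo_maximal_key less.prems(1) unfolding well_formed_def by blast
  show ?case
  proof (cases "z = k1")
    case True
    then show ?thesis using undoable_before.undo[OF undo(1)] undo(2) by simp
  next
    case False
    have "z \<noteq> k2" using z(1) less.prems(4) by auto
    have ord: "ord X' \<subseteq> ord X" using fwd_ord[OF undo(1)] by blast
    have "finite ?U" by (rule finite_subset[OF _ finite_keys]) auto
    have "{x \<in> keys X'. (k1, x) \<in> (ord X')\<^sup>*} \<subseteq> ?U - {z}"
      using fwd_keys[OF undo(1)] undo(2) rtrancl_mono[OF ord] by auto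
    then have "card {x \<in> keys X'. (k1, x) \<in> (ord X')\<^sup>*} \<le> card (?U - {z})"
      using \<open>finite ?U\<close> by (intro card_mono) auto
    also have "\<dots> < card ?U" using card_Diff1_less[OF \<open>finite ?U\<close> z(1)] .
    finally have "card {x \<in> keys X'. (k1, x) \<in> (ord X')\<^sup>*} < card ?U" .
    moreover have "well_formed X'" using fwd_well_formed_iff[OF undo(1)] less.prems(1) by simp
    moreover have "k1 \<in> keys X'" using fwd_keys[OF undo(1)] undo(2) False less.prems(2) by auto
    moreover have "(k1, k2) \<notin> (ord X')\<^sup>*" using less.prems(4) rtrancl_mono[OF ord] by blast
    ultimately have "undoable_before X' k1 k2" using less.hyps less.prems(3) by blast
    then show ?thesis using undoable_before.step[OF undo(1)] undo(2) \<open>z \<noteq> k2\<close> by simp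
  qed
qed

lemma key_le_iff_not_undoable_before:
  assumes "well_formed X"
  shows "key_le X k1 k2 \<longleftrightarrow> k1 \<in> keys X \<and> k2 \<in> keys X \<and> (k1 = k2 \<or> \<not> undoable_before X k1 k2)"
proof (cases "k1 \<in> keys X \<and> k2 \<in> keys X \<and> k1 \<noteq> k2")
  case True
  then show ?thesis
    unfolding key_le_def
    using undoable_before_not_below[of X k1 k2] undoable_before_if_not_below[OF assms, of k1 k2]
    by blast
qed (auto simp: key_le_def)

definition bwd_key_sim :: "('n proc \<Rightarrow> 'n proc \<Rightarrow> bool) \<Rightarrow> bool" where
  "bwd_key_sim S \<longleftrightarrow> (\<forall>X Y X' th. S X Y \<longrightarrow> fwd X' th X \<longrightarrow>
     (\<exists>Y' th'. fwd Y' th' Y \<and> pkey th' = pkey th \<and> S X' Y'))"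

lemma undoable_before_transfer:
  assumes "bwd_key_sim S"
  shows "undoable_before X k1 k2 \<Longrightarrow> S X Y \<Longrightarrow> undoable_before Y k1 k2"
proof (induction arbitrary: Y rule: undoable_before.induct)
  case (undo X' th X k1 k2)
  then obtain Y' th' where "fwd Y' th' Y" "pkey th' = pkey th"
    using assms unfolding bwd_key_sim_def by blast
  then show ?case using undo.hyps(2) undoable_before.undo by metis
next
  case (step X' th X k2 k1)
  then obtain Y' th' where "fwd Y' th' Y" "pkey th' = pkey th" "S X' Y'"
    using assms unfolding bwd_key_sim_def by blast
  then show ?case using step undoable_before.step by metis
qed

lemma FR_bisim_fwd_left:
  "FR_bisim R P Q \<Longrightarrow> R X Y \<Longrightarrow> fwd X th X' \<Longrightarrow>
    \<exists>th' Y'. fwd Y th' Y' \<and> plab_act th = plab_act th' \<and> pkey th = pkey th' \<and> R X' Y'"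
  unfolding FR_bisim_def by blast

lemma FR_bisim_fwd_right:
  "FR_bisim R P Q \<Longrightarrow> R X Y \<Longrightarrow> fwd Y th' Y' \<Longrightarrow>
    \<exists>th X'. fwd X th X' \<and> plab_act th = plab_act th' \<and> pkey th = pkey th' \<and> R X' Y'"
  unfolding FR_bisim_def by blast

lemma FR_bisim_bwd_key_sim:
  assumes "FR_bisim R P Q"
  shows "bwd_key_sim R" and "bwd_key_sim (\<lambda>Y X. R X Y)"
proof -
  show "bwd_key_sim R"
    unfolding bwd_key_sim_def
  proof (intro allI impI)
    fix X Y X' th
    assume "R X Y" and "fwd X' th X"
    then obtain th' Y' where "fwd Y' th' Y" "pkey th = pkey th'" "R X' Y'"
      using assms unfolding FR_bisim_def bwd_def by blast
    then show "\<exists>Y' th'. fwd Y' th' Y \<and> pkey th' = pkey th \<and> R X' Y'" by auto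
  qed
  show "bwd_key_sim (\<lambda>Y X. R X Y)"
    unfolding bwd_key_sim_def
  proof (intro allI impI)
    fix Y X Y' th
    assume "R X Y" and "fwd Y' th Y"
    then show "\<exists>X' th'. fwd X' th' X \<and> pkey th' = pkey th \<and> R X' Y'"
      using assms unfolding FR_bisim_def bwd_def by blast
  qed
qed

lemma FR_bisim_undoable_before_iff:
  assumes "FR_bisim R P Q" and "R X Y"
  shows "undoable_before X k1 k2 \<longleftrightarrow> undoable_before Y k1 k2"
  using undoable_before_transfer[OF FR_bisim_bwd_key_sim(1)[OF assms(1)]]
    undoable_before_transfer[OF FR_bisim_bwd_key_sim(2)[OF assms(1)]] assms(2) by blast

lemma FR_bisim_key_le:
  assumes "FR_bisim R P Q" and "R X Y" and "well_formed X" and "well_formed Y"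
    and "keys X = keys Y"
  shows "key_le X k1 k2 \<longleftrightarrow> key_le Y k1 k2"
  using FR_bisim_undoable_before_iff[OF assms(1,2)] key_le_iff_not_undoable_before[OF assms(3)]
    key_le_iff_not_undoable_before[OF assms(4)] assms(5) by simp

definition kp_rel :: "('n proc \<Rightarrow> 'n proc \<Rightarrow> bool) \<Rightarrow> 'n proc \<Rightarrow> 'n proc \<Rightarrow>
    ('n proc \<times> 'n proc \<times> 'n evmap) set" where
  "kp_rel R P Q = {(X, Y, f). R X Y \<and> (\<exists>ts. chain P ts X) \<and> (\<exists>ts. chain Q ts Y) \<and>
     keys X = keys Y \<and> bij_rel f (ev X) (ev Y) \<and>
     (\<forall>(e, d)\<in>f. ev_lab e = ev_lab d \<and> ev_key e = ev_key d)}"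

lemma bij_rel_insert:
  "bij_rel f A B \<Longrightarrow> a \<notin> A \<Longrightarrow> b \<notin> B \<Longrightarrow> bij_rel (insert (a, b) f) (insert a A) (insert b B)"
  unfolding bij_rel_def by blast

lemma kp_rel_extend:
  assumes "keys P = {}" and "keys Q = {}" and "(X, Y, f) \<in> kp_rel R P Q"
    and "fwd X th X'" and "fwd Y th' Y'" and "plab_act th = plab_act th'" and "pkey th = pkey th'"
    and "R X' Y'"
  shows "(X', Y', f \<union> {(eclass (X, th, True, X'), eclass (Y, th', True, Y'))}) \<in> kp_rel R P Q"
proof -
  let ?t = "(X, th, True, X')" and ?u = "(Y, th', True, Y')"
  obtain ts us where chains: "chain P ts X" "chain Q us Y"
    using assms(3) by (auto simp: kp_rel_def)
  have valid: "valid ?t" "valid ?u" using assms(4,5) by (simp_all add: valid_iff)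
  have "chain P (ts @ [?t]) X'" "chain Q (us @ [?u]) Y'"
    using chain_snoc[OF chains(1) valid(1)] chain_snoc[OF chains(2) valid(2)] by simp_all
  moreover have "bij_rel f (ev X) (ev Y)" using assms(3) by (simp add: kp_rel_def)
  then have "bij_rel (insert (eclass ?t, eclass ?u) f) (ev X') (ev Y')"
    using bij_rel_insert ev_fwd[OF assms(1) chains(1) assms(4)]
      ev_fwd[OF assms(2) chains(2) assms(5)]
    by simp
  moreover have "ev_lab (eclass ?t) = ev_lab (eclass ?u)" "ev_key (eclass ?t) = ev_key (eclass ?u)"
    using ev_lab_eclass[OF valid(1)] ev_lab_eclass[OF valid(2)]
      ev_key_eclass[OF valid(1)] ev_key_eclass[OF valid(2)] assms(6,7) by simp_all
  moreover have "keys X' = keys Y'"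
    using fwd_keys[OF assms(4)] fwd_keys[OF assms(5)] assms(3,7) by (simp add: kp_rel_def)
  ultimately show ?thesis using assms(3,8) by (auto simp: kp_rel_def)
qed

lemma kp_rel_order_pres:
  assumes "FR_bisim R P Q" and "keys P = {}" and "keys Q = {}" and "(X, Y, f) \<in> kp_rel R P Q"
  shows "order_pres X Y f"
proof -
  obtain ts us where "chain P ts X" "chain Q us Y" "R X Y" "keys X = keys Y"
    using assms(4) by (auto simp: kp_rel_def)
  then have "key_le X k1 k2 \<longleftrightarrow> key_le Y k1 k2" for k1 k2
    using FR_bisim_key_le[OF assms(1)] chain_from_standard_well_formed assms(2,3) by blast
  moreover have "ev_key e = ev_key d" if "(e, d) \<in> f" for e d
    using assms(4) that by (auto simp: kp_rel_def)
  ultimately show ?thesis unfolding order_pres_def by auto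
qed

lemma FR_bisim_imp_KP_bisim:
  assumes "FR_bisim R P Q" and "standard P" and "standard Q"
  shows "KP_bisim (kp_rel R P Q) P Q"
proof -
  have keys: "keys P = {}" "keys Q = {}" using assms(2,3) by (simp_all add: standard_def)
  have "R P Q" "chain P [] P" "chain Q [] Q" using assms(1) by (simp_all add: FR_bisim_def)
  then have "(P, Q, {}) \<in> kp_rel R P Q"
    using ev_standard[OF keys(1)] ev_standard[OF keys(2)] keys
    unfolding kp_rel_def bij_rel_def by blast
  moreover have "bij_rel f (ev X) (ev Y) \<and> label_pres f \<and> order_pres X Y f"
    if "(X, Y, f) \<in> kp_rel R P Q" for X Y f
    using that kp_rel_order_pres[OF assms(1) keys]
    by (auto simp: kp_rel_def label_pres_def)
  moreover have "\<exists>th' Y'. fwd Y th' Y' \<and>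
      (X', Y', f \<union> {(eclass (X, th, True, X'), eclass (Y, th', True, Y'))}) \<in> kp_rel R P Q"
    if "(X, Y, f) \<in> kp_rel R P Q" and "fwd X th X'" for X Y f th X'
    using FR_bisim_fwd_left[OF assms(1) _ that(2)] kp_rel_extend[OF keys that(1,2)] that(1)
    by (fastforce simp: kp_rel_def)
  moreover have "\<exists>th X'. fwd X th X' \<and>
      (X', Y', f \<union> {(eclass (X, th, True, X'), eclass (Y, th', True, Y'))}) \<in> kp_rel R P Q"
    if "(X, Y, f) \<in> kp_rel R P Q" and "fwd Y th' Y'" for X Y f th' Y'
    using FR_bisim_fwd_right[OF assms(1) _ that(2)] kp_rel_extend[OF keys that(1) _ that(2)]
      that(1)
    by (fastforce simp: kp_rel_def)
  ultimately show ?thesis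
    unfolding KP_bisim_def using assms(2,3) by blast
qed

lemma orig_standard: "keys X = {} \<Longrightarrow> orig X = X"
  by (induction X) auto

theorem proposition7p18:
  fixes P Q :: "'n proc"
  assumes "standard P" and "standard Q"
    and "FR_equiv P Q"
  shows "KP_equiv P Q"
proof -
  obtain R where "FR_bisim R P Q" using assms(3) unfolding FR_equiv_def by blast
  then have "KP_bisim (kp_rel R P Q) P Q" using FR_bisim_imp_KP_bisim assms(1,2) by blast
  moreover have "orig P = P" "orig Q = Q"
    using assms(1,2) orig_standard by (simp_all add: standard_def)
  moreover have "(P, Q, {}) \<in> kp_rel R P Q" using calculation(1) by (simp add: KP_bisim_def)
  ultimately show ?thesis unfolding KP_equiv_def by metis
qed

end
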